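(* Let $S$ be a densely defined symmetric operator on a Hilbert space $\mathcal{H}$ and $V\ge0$ a bounded everywhere defined non-negative operator. Let $\mathcal{V}\subset\mathcal{D}(S^* )$ be a subspace with $\mathcal{V}\cap\mathcal{D}(S)=\{0\}$, let $\mathcal{L}:\mathcal{V}\to\mathcal{H}$ be linear, let $S_{\mathcal{V},\mathcal{L}}$ be the operator with domain $\mathcal{D}(S)\dot{+}\mathcal{V}$ acting by $f+v\mapsto S^*(f+v)+\mathcal{L}v$, and let $S_{\mathcal{V}}:=S_{\mathcal{V},0}=S^*\upharpoonright_{\mathcal{D}(S)\dot{+}\mathcal{V}}$. (i) If $S_{\mathcal{V}}$ is symmetric, then $S_{\mathcal{V}}+iV$ is the only dissipative extension of $S+iV$ with domain equal to $\mathcal{D}(S_{\mathcal{V}})$. Moreover, if $\mathcal{L}\neq0$, there is no $\gamma\in\mathbb{R}^+$ such that $\mathrm{Im}\langle\psi,(S_{\mathcal{V},\mathcal{L}}+iV)\psi\rangle\ge-\gamma\|\psi\|^2$ for all $\psi\in\mathcal{D}(S_{\mathcal{V},\mathcal{L}})$. (ii) If there exists $v\in\mathcal{V}$ with $\mathrm{Im}\langle v,S_{\mathcal{V}}v\rangle<0$, then there exists no linear $\mathcal{L}:\mathcal{V}\to\mathcal{H}$ and no bounded non-negative operator $V\ge0$ such that $S_{\mathcal{V},\mathcal{L}}+iV$ is dissipative. (iii) If there exists $\varepsilon>0$ such that $\mathrm{Im}\langle v,S_{\mathcal{V}}v\rangle\ge\varepsilon\|v\|^2$ for all $v\in\mathcal{V}$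 and $\mathcal{L}$ is bounded, then $$\mathrm{Im}\langle\psi,S_{\mathcal{V},\mathcal{L}}\psi\rangle\ge-\frac{\|\mathcal{L}\|^2}{4\varepsilon}\|\psi\|^2\quad\text{for all }\psi\in\mathcal{D}(S_{\mathcal{V},\mathcal{L}}).$$ In particular, for any bounded $V\ge\frac{\|\mathcal{L}\|^2}{4\varepsilon}$ we get $\mathrm{Im}\langle\psi,(S_{\mathcal{V},\mathcal{L}}+iV)\psi\rangle\ge0$ for all $\psi\in\mathcal{D}(S_{\mathcal{V},\mathcal{L}})$.
   Context: The inner product is antilinear in the first argument. A densely defined operator $B$ is dissipative if $\mathrm{Im}\langle\psi,B\psi\rangle\ge0$ for all $\psi\in\mathcal{D}(B)$. An extension of $S+iV$ means an operator extending $S+iV$ defined on $\mathcal{D}(S)$. *)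

theory Defs
  imports "HOL-Analysis.Analysis"
begin

text \<open>Complex inner product spaces (the library only has real inner product spaces).
  The inner product is antilinear in the first argument and linear in the second;
  the norm is the one induced by the inner product.  A complex Hilbert space is a
  type of class complex_inner that is also a complete_space.\<close>

class complex_inner = real_normed_vector +
  fixes scaleC :: "complex \<Rightarrow> 'a \<Rightarrow> 'a" (infixr "*\<^sub>C" 75)
    and cinner :: "'a \<Rightarrow> 'a \<Rightarrow> complex"
  assumes scaleC_add_right: "a *\<^sub>C (x + y) = a *\<^sub>C x + a *\<^sub>C y"
    and scaleC_add_left: "(a + b) *\<^sub>C x = a *\<^sub>C x + b *\<^sub>C x"
    and scaleC_scaleC: "a *\<^sub>C (b *\<^sub>C x) = (a * b) *\<^sub>C x"
    and scaleC_one: "1 *\<^sub>C x = x"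
    and scaleR_scaleC: "scaleR r x = complex_of_real r *\<^sub>C x"
    and cinner_add_right: "cinner x (y + z) = cinner x y + cinner x z"
    and cinner_scaleC_right: "cinner x (a *\<^sub>C y) = a * cinner x y"
    and cinner_commute: "cinner y x = cnj (cinner x y)"
    and cinner_self_norm: "cinner x x = complex_of_real ((norm x)\<^sup>2)"

definition csubspace :: "'a::complex_inner set \<Rightarrow> bool" where
  "csubspace U \<longleftrightarrow> 0 \<in> U \<and> (\<forall>x\<in>U. \<forall>y\<in>U. x + y \<in> U) \<and> (\<forall>c. \<forall>x\<in>U. c *\<^sub>C x \<in> U)"

definition clinear_on :: "'a::complex_inner set \<Rightarrow> ('a \<Rightarrow> 'b::complex_inner) \<Rightarrow> bool" where
  "clinear_on U f \<longleftrightarrow> (\<forall>x\<in>U. \<forall>y\<in>U. f (x + y) = f x + f y) \<and>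
                       (\<forall>c. \<forall>x\<in>U. f (c *\<^sub>C x) = c *\<^sub>C f x)"

text \<open>A (possibly unbounded) operator is represented by its domain D and its action A
  (values of A outside D are irrelevant).\<close>

definition densely_defined :: "'a::complex_inner set \<Rightarrow> bool" where
  "densely_defined D \<longleftrightarrow> closure D = UNIV"

definition symmetric_op :: "'a::complex_inner set \<Rightarrow> ('a \<Rightarrow> 'a) \<Rightarrow> bool" where
  "symmetric_op D A \<longleftrightarrow> densely_defined D \<and>
     (\<forall>x\<in>D. \<forall>y\<in>D. cinner (A x) y = cinner x (A y))"

definition dissipative_op :: "'a::complex_inner set \<Rightarrow> ('a \<Rightarrow> 'a) \<Rightarrow> bool" where
  "dissipative_op D B \<longleftrightarrow> (\<forall>\<psi>\<in>D. Im (cinner \<psi> (B \<psi>)) \<ge> 0)"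

definition adj_dom :: "'a::complex_inner set \<Rightarrow> ('a \<Rightarrow> 'a) \<Rightarrow> 'a set" where
  "adj_dom D S = {y. \<exists>z. \<forall>x\<in>D. cinner (S x) y = cinner x z}"

definition adj :: "'a::complex_inner set \<Rightarrow> ('a \<Rightarrow> 'a) \<Rightarrow> 'a \<Rightarrow> 'a" where
  "adj D S y = (THE z. \<forall>x\<in>D. cinner (S x) y = cinner x z)"

definition bounded_op :: "('a::complex_inner \<Rightarrow> 'a) \<Rightarrow> bool" where
  "bounded_op V \<longleftrightarrow> clinear_on UNIV V \<and> (\<exists>K. \<forall>x. norm (V x) \<le> K * norm x)"

definition op_ge :: "('a::complex_inner \<Rightarrow> 'a) \<Rightarrow> real \<Rightarrow> bool" where
  "op_ge V c \<longleftrightarrow> (\<forall>x. Im (cinner x (V x)) = 0 \<and> Re (cinner x (V x)) \<ge> c * (norm x)\<^sup>2)"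

definition opnorm_on :: "'a::complex_inner set \<Rightarrow> ('a \<Rightarrow> 'a) \<Rightarrow> real" where
  "opnorm_on U L = Inf {K. K \<ge> 0 \<and> (\<forall>v\<in>U. norm (L v) \<le> K * norm v)}"

text \<open>The operator S_{V,L}: domain D(S) + V (direct sum), f + v \<mapsto> S*(f+v) + L v.\<close>

definition ext_dom :: "'a::complex_inner set \<Rightarrow> 'a set \<Rightarrow> 'a set" where
  "ext_dom D Vs = {f + v | f v. f \<in> D \<and> v \<in> Vs}"

definition ext_op :: "'a::complex_inner set \<Rightarrow> ('a \<Rightarrow> 'a) \<Rightarrow> 'a set \<Rightarrow> ('a \<Rightarrow> 'a) \<Rightarrow> 'a \<Rightarrow> 'a" where
  "ext_op D S Vs L \<psi> = adj D S \<psi> + L (THE v. v \<in> Vs \<and> \<psi> - v \<in> D)"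

end

theory Submission
  imports Defs
begin

(* For psi = f + v with f in D(S) and v in V, symmetry of S gives
   Im <psi, S* psi> = Im <v, S* v>, hence
     Im <psi, (S_{V,L} + iV) psi> = Im <v, S* v> + Im <psi, L v> + <psi, V psi>.
   Fixing v and letting f run through the dense set D(S), every continuous lower
   bound in psi extends from the dense translate D(S) + v to the whole space.
   Evaluating at psi = 0 gives (ii).  In (i) the first term vanishes, and testing
   at psi = i s w for small s > 0 shows that a perturbation w (namely L v, or
   B v - (S_V + iV) v for a competing extension B) gives -s |w|^2 on the right
   against an O(s^2) lower bound, so w = 0.  Part (iii) is the elementary estimate
   eps a^2 - N a b >= -N^2 b^2 / (4 eps). *)

lemma cinner_add_left: "cinner (x + y) z = cinner x z + cinner (y::'a::complex_inner) z"
  by (metis cinner_commute cinner_add_right complex_cnj_add)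

lemma cinner_zero_right [simp]: "cinner (x::'a::complex_inner) 0 = 0"
  using cinner_add_right[of x 0 0] by simp

lemma cinner_zero_left [simp]: "cinner 0 (x::'a::complex_inner) = 0"
  by (metis cinner_commute cinner_zero_right complex_cnj_zero)

lemma cinner_minus_right: "cinner (x::'a::complex_inner) (- y) = - cinner x y"
  using cinner_add_right[of x y "- y"] by (simp add: add_eq_0_iff2)

lemma cinner_diff_right: "cinner (x::'a::complex_inner) (y - z) = cinner x y - cinner x z"
  using cinner_add_right[of x y "- z"] by (simp add: cinner_minus_right)

lemma cinner_scaleC_left: "cinner (a *\<^sub>C x) (y::'a::complex_inner) = cnj a * cinner x y"
  by (metis cinner_commute cinner_scaleC_right complex_cnj_mult complex_cnj_cnj)

lemma norm_scaleC: "norm (a *\<^sub>C (x::'a::complex_inner)) = cmod a * norm x"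
proof -
  have "complex_of_real ((norm (a *\<^sub>C x))\<^sup>2) = cnj a * a * complex_of_real ((norm x)\<^sup>2)"
    by (metis cinner_self_norm cinner_scaleC_left cinner_scaleC_right mult.assoc)
  also have "cnj a * a = complex_of_real ((cmod a)\<^sup>2)"
    by (metis complex_norm_square mult.commute)
  finally have "(norm (a *\<^sub>C x))\<^sup>2 = (cmod a * norm x)\<^sup>2"
    by (metis of_real_eq_iff of_real_mult power_mult_distrib)
  then show ?thesis by (simp add: power2_eq_iff_nonneg)
qed

lemma Re_cinner_le: "Re (cinner x (y::'a::complex_inner)) \<le> norm x * norm y"
proof -
  have "Re (cinner (x + y) (x + y)) = Re (cinner x x) + 2 * Re (cinner x y) + Re (cinner y y)"
    by (simp add: cinner_add_left cinner_add_right cinner_commute[of y x])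
  then have "(norm (x + y))\<^sup>2 = (norm x)\<^sup>2 + 2 * Re (cinner x y) + (norm y)\<^sup>2"
    by (simp add: cinner_self_norm)
  moreover have "(norm (x + y))\<^sup>2 \<le> (norm x + norm y)\<^sup>2"
    by (simp add: norm_triangle_ineq power_mono)
  ultimately show ?thesis by (simp add: power2_sum)
qed

lemma abs_Im_cinner_le: "\<bar>Im (cinner x (y::'a::complex_inner))\<bar> \<le> norm x * norm y"
  using Re_cinner_le[of "\<i> *\<^sub>C x" y] Re_cinner_le[of "(- \<i>) *\<^sub>C x" y]
  by (simp add: cinner_scaleC_left norm_scaleC)

lemma continuous_on_Im_cinner_left:
  "continuous_on UNIV (\<lambda>y. Im (cinner y (w::'a::complex_inner)))"
proof -
  have "bounded_linear (\<lambda>y. Im (cinner y w))"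
  proof (rule bounded_linear_intro[where K = "norm w"])
    show "Im (cinner (x + y) w) = Im (cinner x w) + Im (cinner y w)" for x y
      by (simp add: cinner_add_left)
    show "Im (cinner (r *\<^sub>R x) w) = r *\<^sub>R Im (cinner x w)" for r x
      by (simp add: scaleR_scaleC cinner_scaleC_left)
    show "norm (Im (cinner x w)) \<le> norm x * norm w" for x
      using abs_Im_cinner_le by simp
  qed
  then show ?thesis by (simp add: linear_continuous_on)
qed

lemma csubspace_diff: "csubspace U \<Longrightarrow> x \<in> U \<Longrightarrow> y \<in> U \<Longrightarrow> x - y \<in> U"
  unfolding csubspace_def by (metis scaleR_scaleC scaleR_minus1_left diff_conv_add_uminus)

lemma nonneg_on_dense_translate:
  fixes g :: "'a::real_normed_vector \<Rightarrow> real"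
  assumes "closure D = UNIV" "continuous_on UNIV g" "\<forall>f\<in>D. 0 \<le> g (f + v)"
  shows "0 \<le> g y"
proof -
  have "closed {x. 0 \<le> g (x + v)}"
    by (intro closed_Collect_le continuous_on_const continuous_on_compose2[OF assms(2)]
        continuous_intros) auto
  then have "closure D \<subseteq> {x. 0 \<le> g (x + v)}"
    using assms(3) by (intro closure_minimal) auto
  then show ?thesis
    using assms(1) by (metis (mono_tags) UNIV_I diff_add_cancel mem_Collect_eq subsetD)
qed

lemma Im_cinner_quadratic_bound_imp_zero:
  fixes w :: "'a::complex_inner"
  assumes "\<And>y. - \<gamma> * (norm y)\<^sup>2 \<le> Im (cinner y w)"
  shows "w = 0"
proof (rule ccontr)
  assume "w \<noteq> 0"
  \<comment> \<open>At \<open>y = (\<i> * s) *\<^sub>C w\<close> the right-hand side is \<open>-s\<parallel>w\<parallel>\<^sup>2\<close>, the left only \<open>O(s\<^sup>2)\<close>.\<close>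
  define s where "s = 1 / (\<bar>\<gamma>\<bar> + 1)"
  have s: "s > 0" "\<gamma> * s < 1"
    unfolding s_def by (auto simp: field_simps)
  have "- \<gamma> * (norm ((\<i> * s) *\<^sub>C w))\<^sup>2 \<le> Im (cinner ((\<i> * s) *\<^sub>C w) w)"
    by (rule assms)
  then have "- \<gamma> * s\<^sup>2 * (norm w)\<^sup>2 \<le> - s * (norm w)\<^sup>2"
    using s by (simp add: norm_scaleC cinner_scaleC_left cinner_self_norm norm_mult power_mult_distrib)
  then have "s * (1 - \<gamma> * s) * (norm w)\<^sup>2 \<le> 0"
    by (simp add: algebra_simps power2_eq_square)
  with s \<open>w \<noteq> 0\<close> show False
    by (simp add: mult_le_0_iff)
qed

lemma dense_Im_cinner_bound_imp_zero:
  fixes w :: "'a::complex_inner"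
  assumes "closure D = UNIV" "\<forall>f\<in>D. - \<gamma> * (norm (f + v))\<^sup>2 \<le> Im (cinner (f + v) w)"
  shows "w = 0"
proof (rule Im_cinner_quadratic_bound_imp_zero)
  fix y
  have "continuous_on UNIV (\<lambda>y. \<gamma> * (norm y)\<^sup>2 + Im (cinner y w))"
    by (intro continuous_intros continuous_on_Im_cinner_left)
  with assms have "0 \<le> \<gamma> * (norm y)\<^sup>2 + Im (cinner y w)"
    by (intro nonneg_on_dense_translate[where v = v]) auto
  then show "- \<gamma> * (norm y)\<^sup>2 \<le> Im (cinner y w)" by simp
qed

lemma symmetric_op_dense: "symmetric_op D A \<Longrightarrow> closure D = UNIV"
  unfolding symmetric_op_def densely_defined_def by blast

lemma symmetric_op_Im_cinner:
  assumes "symmetric_op D A" "x \<in> D"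
  shows "Im (cinner x (A x)) = 0"
proof -
  have "cnj (cinner x (A x)) = cinner x (A x)"
    using assms unfolding symmetric_op_def by (metis cinner_commute)
  from arg_cong[OF this, of Im] show ?thesis by simp
qed

lemma adj_eq:
  fixes D :: "'a::complex_inner set"
  assumes "closure D = UNIV" "\<forall>x\<in>D. cinner (S x) y = cinner x z"
  shows "adj D S y = z"
  unfolding adj_def
proof (rule the_equality)
  fix z' assume "\<forall>x\<in>D. cinner (S x) y = cinner x z'"
  with assms(2) have "\<forall>x\<in>D. - 0 * (norm (x + 0))\<^sup>2 \<le> Im (cinner (x + 0) (z' - z))"
    by (simp add: cinner_diff_right)
  then show "z' = z"
    using dense_Im_cinner_bound_imp_zero[OF assms(1)] by fastforce
qed (use assms in blast)

lemma cinner_adj: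
  assumes "closure D = UNIV" "y \<in> adj_dom D S" "x \<in> D"
  shows "cinner (S x) y = cinner x (adj D S y)"
proof -
  obtain z where "\<forall>x\<in>D. cinner (S x) y = cinner x z"
    using assms(2) unfolding adj_dom_def by blast
  with adj_eq[OF assms(1) this] assms(3) show ?thesis by simp
qed

lemma adj_add:
  assumes "symmetric_op D S" "f \<in> D" "v \<in> adj_dom D S"
  shows "adj D S (f + v) = S f + adj D S v"
proof (rule adj_eq[OF symmetric_op_dense[OF assms(1)]], intro ballI)
  fix x assume "x \<in> D"
  with assms show "cinner (S x) (f + v) = cinner x (S f + adj D S v)"
    using cinner_adj[OF symmetric_op_dense[OF assms(1)]]
    unfolding symmetric_op_def by (simp add: cinner_add_right)
qed

lemma Im_cinner_adj_add:
  assumes "symmetric_op D S" "f \<in> D" "v \<in> adj_dom D S"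
  shows "Im (cinner (f + v) (adj D S (f + v))) = Im (cinner v (adj D S v))"
proof -
  have "cinner v (S f) = cnj (cinner f (adj D S v))"
    using cinner_adj[OF symmetric_op_dense] assms by (metis cinner_commute)
  moreover have "Im (cinner f (S f)) = 0"
    using symmetric_op_Im_cinner assms by blast
  ultimately show ?thesis
    by (simp add: adj_add[OF assms] cinner_add_left cinner_add_right)
qed

lemma bounded_op_Re_cinner_le:
  assumes "bounded_op V"
  obtains K where "\<And>x. Re (cinner x (V x)) \<le> K * (norm x)\<^sup>2"
proof -
  obtain K where K: "\<forall>x. norm (V x) \<le> K * norm x"
    using assms unfolding bounded_op_def by blast
  have "Re (cinner x (V x)) \<le> K * (norm x)\<^sup>2" for x
  proof -
    have "Re (cinner x (V x)) \<le> norm x * norm (V x)" by (rule Re_cinner_le)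
    also have "\<dots> \<le> norm x * (K * norm x)" using K by (simp add: mult_left_mono)
    finally show ?thesis by (simp add: power2_eq_square algebra_simps)
  qed
  then show thesis by (rule that)
qed

lemma Im_cinner_add_iscaleC: "Im (cinner x (y + \<i> *\<^sub>C z)) = Im (cinner x y) + Re (cinner x z)"
  by (simp add: cinner_add_right cinner_scaleC_right)

lemma op_ge_Im_cinner_add_nonneg:
  assumes "op_ge V c" "- c * (norm x)\<^sup>2 \<le> Im (cinner x y)"
  shows "0 \<le> Im (cinner x (y + \<i> *\<^sub>C V x))"
proof -
  have "c * (norm x)\<^sup>2 \<le> Re (cinner x (V x))"
    using assms(1) unfolding op_ge_def by blast
  with assms(2) show ?thesis
    by (simp add: Im_cinner_add_iscaleC)
qed

lemma norm_le_opnorm_on: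
  assumes "\<exists>K. \<forall>v\<in>U. norm (L v) \<le> K * norm v" "v \<in> U"
  shows "norm (L v) \<le> opnorm_on U L * norm v"
proof -
  let ?Ks = "{K. K \<ge> 0 \<and> (\<forall>v\<in>U. norm (L v) \<le> K * norm v)}"
  obtain K where K: "\<forall>v\<in>U. norm (L v) \<le> K * norm v"
    using assms(1) by blast
  have "\<forall>v\<in>U. norm (L v) \<le> max K 0 * norm v"
    using K by (metis max.cobounded1 mult_right_mono norm_ge_zero order_trans)
  then have "max K 0 \<in> ?Ks" by simp
  then have nonempty: "?Ks \<noteq> {}" by blast
  show ?thesis
  proof (cases "norm v = 0")
    case True
    moreover have "norm (L v) \<le> K * norm v"
      using K assms(2) by blast
    ultimately show ?thesis by simp
  next
    case False
    have "norm (L v) / norm v \<le> opnorm_on U L"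
      unfolding opnorm_on_def
    proof (rule cInf_greatest[OF nonempty])
      fix K' assume "K' \<in> ?Ks"
      with assms(2) False show "norm (L v) / norm v \<le> K'"
        by (simp add: divide_le_eq)
    qed
    with False show ?thesis by (simp add: divide_le_eq)
  qed
qed

lemma ext_op_zero: "ext_op D S Vs (\<lambda>_. 0) = adj D S"
  by (simp add: ext_op_def fun_eq_iff)

locale direct_sum_extension =
  fixes D :: "'a::complex_inner set" and S :: "'a \<Rightarrow> 'a" and Vs :: "'a set"
  assumes csubspace_D: "csubspace D"
    and symmetric_S: "symmetric_op D S"
    and csubspace_Vs: "csubspace Vs"
    and Vs_adj_dom: "Vs \<subseteq> adj_dom D S"
    and Vs_Int_D: "Vs \<inter> D = {0}"
begin

lemma closure_D: "closure D = UNIV"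
  using symmetric_op_dense[OF symmetric_S] .

lemma zero_in_D: "0 \<in> D" and zero_in_Vs: "0 \<in> Vs"
  using csubspace_D csubspace_Vs unfolding csubspace_def by auto

lemma add_in_ext_dom: "f \<in> D \<Longrightarrow> v \<in> Vs \<Longrightarrow> f + v \<in> ext_dom D Vs"
  unfolding ext_dom_def by blast

lemma ext_domE:
  assumes "\<psi> \<in> ext_dom D Vs"
  obtains f v where "f \<in> D" "v \<in> Vs" "\<psi> = f + v"
  using assms unfolding ext_dom_def by blast

lemma ext_op_add:
  assumes "f \<in> D" "v \<in> Vs"
  shows "ext_op D S Vs L (f + v) = adj D S (f + v) + L v"
proof -
  have "(THE v'. v' \<in> Vs \<and> f + v - v' \<in> D) = v"
  proof (rule the_equality)
    show "v \<in> Vs \<and> f + v - v \<in> D"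
      using assms by simp
  next
    fix v' assume v': "v' \<in> Vs \<and> f + v - v' \<in> D"
    then have "v - v' \<in> Vs"
      using assms csubspace_diff[OF csubspace_Vs] by blast
    moreover have "(f + v - v') - f \<in> D"
      using assms v' csubspace_diff[OF csubspace_D] by blast
    ultimately have "v - v' \<in> Vs \<inter> D"
      by (simp add: diff_diff_eq2)
    then show "v' = v"
      using Vs_Int_D by simp
  qed
  then show ?thesis
    unfolding ext_op_def by (rule arg_cong)
qed

lemma Im_cinner_ext_op:
  assumes "f \<in> D" "v \<in> Vs"
  shows "Im (cinner (f + v) (ext_op D S Vs L (f + v)))
    = Im (cinner v (adj D S v)) + Im (cinner (f + v) (L v))"
proof -
  have "Im (cinner (f + v) (adj D S (f + v))) = Im (cinner v (adj D S v))"
    using assms Vs_adj_dom Im_cinner_adj_add[OF symmetric_S] by blast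
  then show ?thesis
    using assms by (simp add: ext_op_add cinner_add_right)
qed

lemma perturbation_of_symmetric_vanishes:
  assumes "symmetric_op (ext_dom D Vs) (adj D S)" "bounded_op V" "v \<in> Vs"
    and bound: "\<forall>f\<in>D. - \<gamma> * (norm (f + v))\<^sup>2
      \<le> Im (cinner (f + v) (adj D S (f + v) + \<i> *\<^sub>C V (f + v) + w))"
  shows "w = 0"
proof -
  obtain K where K: "\<And>x. Re (cinner x (V x)) \<le> K * (norm x)\<^sup>2"
    using bounded_op_Re_cinner_le[OF assms(2)] by blast
  have "- (\<gamma> + K) * (norm (f + v))\<^sup>2 \<le> Im (cinner (f + v) w)" if "f \<in> D" for f
  proof -
    have "Im (cinner (f + v) (adj D S (f + v))) = 0"
      using symmetric_op_Im_cinner[OF assms(1) add_in_ext_dom[OF that assms(3)]] .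
    then have "Im (cinner (f + v) (adj D S (f + v) + \<i> *\<^sub>C V (f + v) + w))
        = Re (cinner (f + v) (V (f + v))) + Im (cinner (f + v) w)"
      by (simp add: cinner_add_right cinner_scaleC_right)
    moreover have "- \<gamma> * (norm (f + v))\<^sup>2
        \<le> Im (cinner (f + v) (adj D S (f + v) + \<i> *\<^sub>C V (f + v) + w))"
      using bound that by blast
    ultimately show ?thesis
      using K[of "f + v"] by (simp add: algebra_simps)
  qed
  then show ?thesis
    using dense_Im_cinner_bound_imp_zero[OF closure_D] by blast
qed

lemma dissipative_extension_unique:
  assumes "symmetric_op (ext_dom D Vs) (adj D S)" "bounded_op V"
    and B_lin: "clinear_on (ext_dom D Vs) B"
    and B_ext: "\<forall>f\<in>D. B f = S f + \<i> *\<^sub>C V f"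
    and B_dis: "dissipative_op (ext_dom D Vs) B"
    and "\<psi> \<in> ext_dom D Vs"
  shows "B \<psi> = adj D S \<psi> + \<i> *\<^sub>C V \<psi>"
proof -
  obtain f v where fv: "f \<in> D" "v \<in> Vs" "\<psi> = f + v"
    using ext_domE[OF assms(6)] by blast
  define w where "w = B v - adj D S v - \<i> *\<^sub>C V v"
  have B_eq: "B (f' + v) = adj D S (f' + v) + \<i> *\<^sub>C V (f' + v) + w" if "f' \<in> D" for f'
  proof -
    have "B (f' + v) = B f' + B v"
      using B_lin add_in_ext_dom[OF that zero_in_Vs] add_in_ext_dom[OF zero_in_D fv(2)]
      unfolding clinear_on_def by simp
    moreover have "adj D S (f' + v) = S f' + adj D S v"
      using adj_add[OF symmetric_S that] Vs_adj_dom fv(2) by blast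
    moreover have "V (f' + v) = V f' + V v"
      using assms(2) unfolding bounded_op_def clinear_on_def by blast
    ultimately show ?thesis
      using B_ext that by (simp add: w_def scaleC_add_right algebra_simps)
  qed
  have "\<forall>f'\<in>D. - 0 * (norm (f' + v))\<^sup>2
      \<le> Im (cinner (f' + v) (adj D S (f' + v) + \<i> *\<^sub>C V (f' + v) + w))"
    using B_dis add_in_ext_dom[OF _ fv(2)] B_eq unfolding dissipative_op_def by force
  then have "w = 0"
    using perturbation_of_symmetric_vanishes[OF assms(1,2) fv(2)] by blast
  then show ?thesis
    using B_eq[OF fv(1)] fv(3) by simp
qed

lemma no_quadratic_lower_bound:
  assumes "symmetric_op (ext_dom D Vs) (adj D S)" "bounded_op V" "v \<in> Vs" "L v \<noteq> 0"
  shows "\<not> (\<forall>\<psi>\<in>ext_dom D Vs.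
    - \<gamma> * (norm \<psi>)\<^sup>2 \<le> Im (cinner \<psi> (ext_op D S Vs L \<psi> + \<i> *\<^sub>C V \<psi>)))"
proof
  assume bound: "\<forall>\<psi>\<in>ext_dom D Vs.
    - \<gamma> * (norm \<psi>)\<^sup>2 \<le> Im (cinner \<psi> (ext_op D S Vs L \<psi> + \<i> *\<^sub>C V \<psi>))"
  have "ext_op D S Vs L (f + v) + \<i> *\<^sub>C V (f + v)
      = adj D S (f + v) + \<i> *\<^sub>C V (f + v) + L v" if "f \<in> D" for f
    using ext_op_add[OF that assms(3)] by (simp add: algebra_simps)
  then have "\<forall>f\<in>D. - \<gamma> * (norm (f + v))\<^sup>2
      \<le> Im (cinner (f + v) (adj D S (f + v) + \<i> *\<^sub>C V (f + v) + L v))"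
    using bound add_in_ext_dom[OF _ assms(3)] by metis
  with perturbation_of_symmetric_vanishes[OF assms(1-3)] assms(4) show False
    by blast
qed

lemma not_dissipative_if_Im_adj_negative:
  assumes "v \<in> Vs" "Im (cinner v (adj D S v)) < 0" "bounded_op V"
  shows "\<not> dissipative_op (ext_dom D Vs) (\<lambda>\<psi>. ext_op D S Vs L \<psi> + \<i> *\<^sub>C V \<psi>)"
proof
  assume dis: "dissipative_op (ext_dom D Vs) (\<lambda>\<psi>. ext_op D S Vs L \<psi> + \<i> *\<^sub>C V \<psi>)"
  obtain K where K: "\<And>x. Re (cinner x (V x)) \<le> K * (norm x)\<^sup>2"
    using bounded_op_Re_cinner_le[OF assms(3)] by blast
  define g where "g y = Im (cinner v (adj D S v)) + K * (norm y)\<^sup>2 + Im (cinner y (L v))" for y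
  have "0 \<le> g (f + v)" if "f \<in> D" for f
  proof -
    have "0 \<le> Im (cinner (f + v) (ext_op D S Vs L (f + v) + \<i> *\<^sub>C V (f + v)))"
      using dis add_in_ext_dom[OF that assms(1)] unfolding dissipative_op_def by blast
    also have "\<dots> = Im (cinner v (adj D S v)) + Im (cinner (f + v) (L v))
        + Re (cinner (f + v) (V (f + v)))"
      by (simp add: Im_cinner_add_iscaleC Im_cinner_ext_op[OF that assms(1)])
    also have "\<dots> \<le> g (f + v)"
      using K[of "f + v"] by (simp add: g_def)
    finally show ?thesis .
  qed
  moreover have "continuous_on UNIV g"
    unfolding g_def by (intro continuous_intros continuous_on_Im_cinner_left)
  ultimately have "0 \<le> g 0"
    using nonneg_on_dense_translate[OF closure_D] by blast
  with assms(2) show False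
    by (simp add: g_def)
qed

lemma Im_cinner_ext_op_lower_bound:
  assumes "\<epsilon> > 0" and coercive: "\<forall>v\<in>Vs. \<epsilon> * (norm v)\<^sup>2 \<le> Im (cinner v (adj D S v))"
    and L_bdd: "\<exists>K. \<forall>v\<in>Vs. norm (L v) \<le> K * norm v" and "\<psi> \<in> ext_dom D Vs"
  shows "- ((opnorm_on Vs L)\<^sup>2 / (4 * \<epsilon>)) * (norm \<psi>)\<^sup>2 \<le> Im (cinner \<psi> (ext_op D S Vs L \<psi>))"
proof -
  obtain f v where fv: "f \<in> D" "v \<in> Vs" "\<psi> = f + v"
    using ext_domE[OF assms(4)] by blast
  define N a b where "N = opnorm_on Vs L" and "a = norm v" and "b = norm \<psi>"
  have "Im (cinner \<psi> (ext_op D S Vs L \<psi>)) = Im (cinner v (adj D S v)) + Im (cinner \<psi> (L v))"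
    using Im_cinner_ext_op[OF fv(1,2)] by (simp add: fv(3))
  moreover have "- (N\<^sup>2 / (4 * \<epsilon>)) * b\<^sup>2 \<le> \<epsilon> * a\<^sup>2 - b * (N * a)"
  proof -
    have "0 \<le> (2 * \<epsilon> * a - N * b)\<^sup>2 / (4 * \<epsilon>)"
      using \<open>\<epsilon> > 0\<close> by simp
    also have "\<dots> = \<epsilon> * a\<^sup>2 - b * (N * a) + N\<^sup>2 / (4 * \<epsilon>) * b\<^sup>2"
      using \<open>\<epsilon> > 0\<close> by (simp add: field_simps power2_eq_square)
    finally show ?thesis by simp
  qed
  moreover have "\<epsilon> * a\<^sup>2 \<le> Im (cinner v (adj D S v))"
    using coercive fv(2) by (simp add: a_def)
  moreover have "- (b * (N * a)) \<le> Im (cinner \<psi> (L v))"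
  proof -
    have "norm (L v) \<le> N * a"
      using norm_le_opnorm_on[OF L_bdd fv(2)] by (simp add: N_def a_def)
    then have "b * norm (L v) \<le> b * (N * a)"
      by (simp add: b_def mult_left_mono)
    with abs_Im_cinner_le[of \<psi> "L v"] show ?thesis
      by (simp add: b_def abs_le_iff)
  qed
  ultimately show ?thesis
    unfolding N_def b_def by linarith
qed

end

lemma dissipative_adj_plus_iV:
  assumes "symmetric_op U (adj D S)" "op_ge V 0"
  shows "dissipative_op U (\<lambda>\<psi>. adj D S \<psi> + \<i> *\<^sub>C V \<psi>)"
  unfolding dissipative_op_def
  using op_ge_Im_cinner_add_nonneg[OF assms(2)] symmetric_op_Im_cinner[OF assms(1)] by simp

theorem corollary6p5:
  fixes D :: "'a::{complex_inner, complete_space} set"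
    and S :: "'a \<Rightarrow> 'a"
    and V :: "'a \<Rightarrow> 'a"
    and Vs :: "'a set"
    and L :: "'a \<Rightarrow> 'a"
  assumes S_dom: "csubspace D"
    and S_lin: "clinear_on D S"
    and S_sym: "symmetric_op D S"
    and V_bdd: "bounded_op V"
    and V_nonneg: "op_ge V 0"
    and Vs_sub: "csubspace Vs"
    and Vs_adj: "Vs \<subseteq> adj_dom D S"
    and Vs_int: "Vs \<inter> D = {0}"
    and L_lin: "clinear_on Vs L"
  shows
    "(symmetric_op (ext_dom D Vs) (ext_op D S Vs (\<lambda>_. 0)) \<longrightarrow>
        (dissipative_op (ext_dom D Vs) (\<lambda>\<psi>. ext_op D S Vs (\<lambda>_. 0) \<psi> + \<i> *\<^sub>C V \<psi>)
         \<and> (\<forall>B. clinear_on (ext_dom D Vs) B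
                \<and> (\<forall>f\<in>D. B f = S f + \<i> *\<^sub>C V f)
                \<and> dissipative_op (ext_dom D Vs) B
                \<longrightarrow> (\<forall>\<psi>\<in>ext_dom D Vs. B \<psi> = ext_op D S Vs (\<lambda>_. 0) \<psi> + \<i> *\<^sub>C V \<psi>)))
        \<and> ((\<exists>v\<in>Vs. L v \<noteq> 0) \<longrightarrow>
             \<not> (\<exists>\<gamma>>0. \<forall>\<psi>\<in>ext_dom D Vs.
                   Im (cinner \<psi> (ext_op D S Vs L \<psi> + \<i> *\<^sub>C V \<psi>)) \<ge> - \<gamma> * (norm \<psi>)\<^sup>2)))
     \<and> ((\<exists>v\<in>Vs. Im (cinner v (ext_op D S Vs (\<lambda>_. 0) v)) < 0) \<longrightarrow>
        (\<forall>L' V'. clinear_on Vs L' \<and> bounded_op V' \<and> op_ge V' 0 \<longrightarrow>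
           \<not> dissipative_op (ext_dom D Vs) (\<lambda>\<psi>. ext_op D S Vs L' \<psi> + \<i> *\<^sub>C V' \<psi>)))
     \<and> (\<forall>\<epsilon>>0. (\<forall>v\<in>Vs. Im (cinner v (ext_op D S Vs (\<lambda>_. 0) v)) \<ge> \<epsilon> * (norm v)\<^sup>2)
          \<and> (\<exists>K. \<forall>v\<in>Vs. norm (L v) \<le> K * norm v) \<longrightarrow>
          (\<forall>\<psi>\<in>ext_dom D Vs. Im (cinner \<psi> (ext_op D S Vs L \<psi>))
                \<ge> - ((opnorm_on Vs L)\<^sup>2 / (4 * \<epsilon>)) * (norm \<psi>)\<^sup>2)
          \<and> (\<forall>V'. bounded_op V' \<and> op_ge V' ((opnorm_on Vs L)\<^sup>2 / (4 * \<epsilon>)) \<longrightarrow>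
               (\<forall>\<psi>\<in>ext_dom D Vs. Im (cinner \<psi> (ext_op D S Vs L \<psi> + \<i> *\<^sub>C V' \<psi>)) \<ge> 0)))"
proof -
  interpret direct_sum_extension D S Vs
    using S_dom S_sym Vs_sub Vs_adj Vs_int by unfold_locales
  have part_i: "dissipative_op (ext_dom D Vs) (\<lambda>\<psi>. adj D S \<psi> + \<i> *\<^sub>C V \<psi>)
      \<and> (\<forall>B. clinear_on (ext_dom D Vs) B \<and> (\<forall>f\<in>D. B f = S f + \<i> *\<^sub>C V f)
            \<and> dissipative_op (ext_dom D Vs) B
          \<longrightarrow> (\<forall>\<psi>\<in>ext_dom D Vs. B \<psi> = adj D S \<psi> + \<i> *\<^sub>C V \<psi>))
      \<and> ((\<exists>v\<in>Vs. L v \<noteq> 0) \<longrightarrow> \<not> (\<exists>\<gamma>>0. \<forall>\<psi>\<in>ext_dom D Vs.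
            - \<gamma> * (norm \<psi>)\<^sup>2 \<le> Im (cinner \<psi> (ext_op D S Vs L \<psi> + \<i> *\<^sub>C V \<psi>))))"
    if "symmetric_op (ext_dom D Vs) (adj D S)"
    using dissipative_adj_plus_iV[OF that V_nonneg] dissipative_extension_unique[OF that V_bdd]
      no_quadratic_lower_bound[OF that V_bdd] by blast
  have part_iii: "0 \<le> Im (cinner \<psi> (ext_op D S Vs L \<psi> + \<i> *\<^sub>C V' \<psi>))"
    if "\<epsilon> > 0" "\<forall>v\<in>Vs. \<epsilon> * (norm v)\<^sup>2 \<le> Im (cinner v (adj D S v))"
      "\<exists>K. \<forall>v\<in>Vs. norm (L v) \<le> K * norm v" "op_ge V' ((opnorm_on Vs L)\<^sup>2 / (4 * \<epsilon>))"
      "\<psi> \<in> ext_dom D Vs" for \<epsilon> V' \<psi>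
    using op_ge_Im_cinner_add_nonneg[OF that(4) Im_cinner_ext_op_lower_bound[OF that(1-3,5)]] .
  show ?thesis
    unfolding ext_op_zero
    using part_i part_iii Im_cinner_ext_op_lower_bound not_dissipative_if_Im_adj_negative
    by blast
qed

end
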